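(* The generating function $$G_{(213,231)}(x,p,q,y,z)=\sum_{n\ge 0}\ \sum_{\pi\in S_n(213,231)} x^n p^{\operatorname{asc}(\pi)} q^{\operatorname{des}(\pi)} y^{\operatorname{MNA}(\pi)} z^{\operatorname{MND}(\pi)}$$ is equal to $$\frac{1 + x + p x^2 y - p^2 x^2 y + q x^2 z - q^2 x^2 z - p q x^2 y z + p q x^3 y z - p^2 q x^3 y z - p q^2 x^3 y z}{1 - p^2 x^2 y - q^2 x^2 z - p q x^2 y z - p^2 q x^3 y z - p q^2 x^3 y z}.$$
   Context: For $n\ge 0$, $S_n$ denotes the set of permutations $\pi=\pi_1\pi_2\cdots\pi_n$ of $[n]=\{1,\dots,n\}$ ($S_0$ consists of the empty permutation, for which all statistics below are $0$). A permutation $\pi\in S_n$ avoids a pattern $\tau\in S_k$ if there are no indices $i_1<\dots<i_k$ such that $\pi_{i_a}<\pi_{i_b}$ if and only if $\tau_a<\tau_b$; $S_n(\tau,\rho)$ is the set of permutations in $S_n$ avoiding both $\tau$ and $\rho$. $\operatorname{asc}(\pi)$ (resp. $\operatorname{des}(\pi)$) is the number of $i\in[n-1]$ with $\pi_i<\pi_{i+1}$ (resp. $\pi_i>\pi_{i+1}$). $\operatorname{MNA}(\pi)$ is the maximum size of a set $I\subseteq[n-1]$ such that $\pi_i<\pi_{i+1}$ for all $i\in I$ and $|i-j|\ge 2$ for distinct $i,j\in I$; $\operatorname{MND}(\pi)$ is defined analogously with $\pi_i>\pi_{i+1}$. *)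

theory Defs
  imports "HOL-Combinatorics.Multiset_Permutations" "HOL-Computational_Algebra.Formal_Power_Series"
begin

text \<open>Permutations of [n] are represented as lists (one-line notation); positions are 0-indexed.\<close>

definition contains_pattern :: "nat list \<Rightarrow> nat list \<Rightarrow> bool" where
  "contains_pattern \<pi> \<tau> \<longleftrightarrow>
     (\<exists>is. length is = length \<tau> \<and> sorted_wrt (<) is \<and> (\<forall>i\<in>set is. i < length \<pi>) \<and>
        (\<forall>a<length \<tau>. \<forall>b<length \<tau>. (\<pi> ! (is ! a) < \<pi> ! (is ! b)) \<longleftrightarrow> (\<tau> ! a < \<tau> ! b)))"

definition avoids :: "nat list \<Rightarrow> nat list \<Rightarrow> bool" where
  "avoids \<pi> \<tau> \<longleftrightarrow> \<not> contains_pattern \<pi> \<tau>"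

definition Av2 :: "nat \<Rightarrow> nat list \<Rightarrow> nat list \<Rightarrow> nat list set" where
  "Av2 n \<tau> \<rho> = {\<pi> \<in> permutations_of_set {1..n}. avoids \<pi> \<tau> \<and> avoids \<pi> \<rho>}"

definition ascset :: "nat list \<Rightarrow> nat set" where
  "ascset \<pi> = {i. Suc i < length \<pi> \<and> \<pi> ! i < \<pi> ! Suc i}"

definition desset :: "nat list \<Rightarrow> nat set" where
  "desset \<pi> = {i. Suc i < length \<pi> \<and> \<pi> ! i > \<pi> ! Suc i}"

definition asc :: "nat list \<Rightarrow> nat" where "asc \<pi> = card (ascset \<pi>)"
definition des :: "nat list \<Rightarrow> nat" where "des \<pi> = card (desset \<pi>)"

definition max_nonadj :: "nat set \<Rightarrow> nat" where
  "max_nonadj S = Max {card I | I. I \<subseteq> S \<and> (\<forall>i\<in>I. \<forall>j\<in>I. i \<noteq> j \<longrightarrow> i + 2 \<le> j \<or> j + 2 \<le> i)}"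

definition MNA :: "nat list \<Rightarrow> nat" where "MNA \<pi> = max_nonadj (ascset \<pi>)"
definition MND :: "nat list \<Rightarrow> nat" where "MND \<pi> = max_nonadj (desset \<pi>)"

end

(* A permutation avoids 213 and 231 exactly when each entry is the smallest or the largest
   of the entries from it onwards.  Such a permutation of an interval {lo..hi} is lo or hi
   followed by such a permutation of the remaining interval, and position i is an ascent
   exactly when the smaller end was taken at step i.  A maximum set of nonadjacent ascents
   (descents) can be chosen greedily from the left, so the weight p^asc q^des y^MNA z^MND
   splits off the first one or two steps.  As the weight depends only on relative order, this
   gives linear recursions for the total weight a_m of such permutations of m + 1 letters and
   for the parts starting with an ascent or a descent.  Eliminating the latter two yields
   a_(m+3) = (p^2 y + q^2 z + pqyz) a_(m+1) + (p^2 q + p q^2) yz a_m, which with the values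
   of a_0, a_1, a_2 gives the stated rational function for 1 + x * sum_m a_m x^m. *)

theory Submission
  imports Defs
begin

lemma contains_pattern_length3:
  "contains_pattern \<pi> [a, b, c] \<longleftrightarrow>
     (\<exists>i j k. i < j \<and> j < k \<and> k < length \<pi> \<and>
        (\<pi>!i < \<pi>!j \<longleftrightarrow> a < b) \<and> (\<pi>!j < \<pi>!i \<longleftrightarrow> b < a) \<and>
        (\<pi>!i < \<pi>!k \<longleftrightarrow> a < c) \<and> (\<pi>!k < \<pi>!i \<longleftrightarrow> c < a) \<and>
        (\<pi>!j < \<pi>!k \<longleftrightarrow> b < c) \<and> (\<pi>!k < \<pi>!j \<longleftrightarrow> c < b))"
  (is "_ \<longleftrightarrow> (\<exists>i j k. ?occurrence i j k)")
proof
  assume "contains_pattern \<pi> [a, b, c]"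
  then obtain "is" where len: "length is = length [a, b, c]" and "sorted_wrt (<) is"
    and "\<forall>i\<in>set is. i < length \<pi>"
    and "\<forall>u<length [a, b, c]. \<forall>v<length [a, b, c].
           (\<pi> ! (is ! u) < \<pi> ! (is ! v)) \<longleftrightarrow> ([a, b, c] ! u < [a, b, c] ! v)"
    unfolding contains_pattern_def by blast
  moreover from len obtain i j k where "is = [i, j, k]"
    by (auto simp: numeral_3_eq_3 length_Suc_conv)
  ultimately show "\<exists>i j k. ?occurrence i j k"
    by (auto simp: numeral_3_eq_3 All_less_Suc)
next
  assume "\<exists>i j k. ?occurrence i j k"
  then obtain i j k where "?occurrence i j k" by blast
  then show "contains_pattern \<pi> [a, b, c]"
    unfolding contains_pattern_def
    by (intro exI[of _ "[i, j, k]"]) (auto simp: numeral_3_eq_3 All_less_Suc)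
qed

lemma contains_213:
  "contains_pattern \<pi> [2,1,3] \<longleftrightarrow>
     (\<exists>i j k. i < j \<and> j < k \<and> k < length \<pi> \<and> \<pi>!j < \<pi>!i \<and> \<pi>!i < \<pi>!k)"
  unfolding contains_pattern_length3 by (auto 0 4 intro: less_trans less_imp_not_less)

lemma contains_231:
  "contains_pattern \<pi> [2,3,1] \<longleftrightarrow>
     (\<exists>i j k. i < j \<and> j < k \<and> k < length \<pi> \<and> \<pi>!k < \<pi>!i \<and> \<pi>!i < \<pi>!j)"
  unfolding contains_pattern_length3 by (auto 0 4 intro: less_trans less_imp_not_less)

fun extremal_entries :: "nat list \<Rightarrow> bool" where
  "extremal_entries [] \<longleftrightarrow> True"
| "extremal_entries (a # l) \<longleftrightarrow>
     ((\<forall>x\<in>set l. a \<le> x) \<or> (\<forall>x\<in>set l. x \<le> a)) \<and> extremal_entries l"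

definition has_nonextremal_entry :: "nat list \<Rightarrow> bool" where
  "has_nonextremal_entry \<pi> \<longleftrightarrow>
     (\<exists>i j k. i < j \<and> i < k \<and> j < length \<pi> \<and> k < length \<pi> \<and> \<pi>!j < \<pi>!i \<and> \<pi>!i < \<pi>!k)"

lemma has_nonextremal_entry_Cons:
  "has_nonextremal_entry (a # l) \<longleftrightarrow>
     has_nonextremal_entry l \<or> ((\<exists>x\<in>set l. x < a) \<and> (\<exists>x\<in>set l. a < x))"
proof
  assume "has_nonextremal_entry (a # l)"
  then obtain i j k where ijk: "i < Suc j" "i < Suc k" "j < length l" "k < length l"
     "l ! j < (a # l) ! i" "(a # l) ! i < l ! k"
    unfolding has_nonextremal_entry_def by (auto simp: less_Suc_eq_0_disj)
  then show "has_nonextremal_entry l \<or> ((\<exists>x\<in>set l. x < a) \<and> (\<exists>x\<in>set l. a < x))"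
  proof (cases i)
    case 0
    then show ?thesis using ijk by (metis nth_Cons_0 nth_mem)
  next
    case (Suc i')
    then show ?thesis using ijk unfolding has_nonextremal_entry_def by auto
  qed
next
  assume "has_nonextremal_entry l \<or> ((\<exists>x\<in>set l. x < a) \<and> (\<exists>x\<in>set l. a < x))"
  then show "has_nonextremal_entry (a # l)"
  proof
    assume "has_nonextremal_entry l"
    then obtain i j k where "i < j" "i < k" "j < length l" "k < length l" "l!j < l!i" "l!i < l!k"
      unfolding has_nonextremal_entry_def by auto
    then show ?thesis
      unfolding has_nonextremal_entry_def by (intro exI[of _ "Suc i"] exI[of _ "Suc j"] exI[of _ "Suc k"]) auto
  next
    assume "(\<exists>x\<in>set l. x < a) \<and> (\<exists>x\<in>set l. a < x)"
    then obtain j k where "j < length l" "k < length l" "l!j < a" "a < l!k"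
      by (metis in_set_conv_nth)
    then show ?thesis
      unfolding has_nonextremal_entry_def by (intro exI[of _ 0] exI[of _ "Suc j"] exI[of _ "Suc k"]) auto
  qed
qed

lemma extremal_entries_iff: "extremal_entries \<pi> \<longleftrightarrow> \<not> has_nonextremal_entry \<pi>"
  by (induction \<pi>) (auto simp: has_nonextremal_entry_Cons not_le, auto simp: has_nonextremal_entry_def)

lemma contains_213_or_231_iff:
  "contains_pattern \<pi> [2,1,3] \<or> contains_pattern \<pi> [2,3,1] \<longleftrightarrow> has_nonextremal_entry \<pi>"
  unfolding contains_213 contains_231 has_nonextremal_entry_def
proof (intro iffI; elim disjE exE conjE)
  fix i j k assume "i < j" "i < k" "j < length \<pi>" "k < length \<pi>" "\<pi>!j < \<pi>!i" "\<pi>!i < \<pi>!k"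
  then show "(\<exists>i j k. i < j \<and> j < k \<and> k < length \<pi> \<and> \<pi>!j < \<pi>!i \<and> \<pi>!i < \<pi>!k) \<or>
    (\<exists>i j k. i < j \<and> j < k \<and> k < length \<pi> \<and> \<pi>!k < \<pi>!i \<and> \<pi>!i < \<pi>!j)"
    by (cases j k rule: linorder_cases) auto
qed (blast intro: less_trans)+

lemma avoids_213_231_iff: "avoids \<pi> [2,1,3] \<and> avoids \<pi> [2,3,1] \<longleftrightarrow> extremal_entries \<pi>"
  unfolding avoids_def extremal_entries_iff contains_213_or_231_iff[symmetric] by blast

definition nonadjacent :: "nat set \<Rightarrow> bool" where
  "nonadjacent I \<longleftrightarrow> (\<forall>i\<in>I. \<forall>j\<in>I. i \<noteq> j \<longrightarrow> i + 2 \<le> j \<or> j + 2 \<le> i)"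

lemma max_nonadj_eq_Max: "max_nonadj S = Max {card I | I. I \<subseteq> S \<and> nonadjacent I}"
  unfolding max_nonadj_def nonadjacent_def ..

lemma finite_nonadjacent_cards: "finite S \<Longrightarrow> finite {card I | I. I \<subseteq> S \<and> nonadjacent I}"
  by (rule finite_subset[of _ "card ` Pow S"]) auto

lemma card_le_max_nonadj:
  assumes "finite S" "I \<subseteq> S" "nonadjacent I"
  shows "card I \<le> max_nonadj S"
  unfolding max_nonadj_eq_Max using assms finite_nonadjacent_cards by (auto intro: Max_ge)

lemma max_nonadj_attained:
  assumes "finite S"
  obtains I where "I \<subseteq> S" "nonadjacent I" "card I = max_nonadj S"
proof -
  note finite_nonadjacent_cards[OF assms]
  moreover have "{card I | I. I \<subseteq> S \<and> nonadjacent I} \<noteq> {}"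
    by (auto simp: nonadjacent_def)
  ultimately have "max_nonadj S \<in> {card I | I. I \<subseteq> S \<and> nonadjacent I}"
    unfolding max_nonadj_eq_Max by (rule Max_in)
  then show ?thesis using that by auto
qed

lemma max_nonadj_empty [simp]: "max_nonadj {} = 0"
  by (metis max_nonadj_attained card_0_eq finite.emptyI subset_empty)

lemma nonadjacent_image_Suc [simp]: "nonadjacent (Suc ` I) \<longleftrightarrow> nonadjacent I"
  by (auto simp: nonadjacent_def)

lemma max_nonadj_image_Suc:
  assumes "finite S"
  shows "max_nonadj (Suc ` S) = max_nonadj S"
proof (rule antisym)
  have "finite (Suc ` S)" using assms by simp
  then obtain I where "I \<subseteq> Suc ` S" "nonadjacent I" "card I = max_nonadj (Suc ` S)"
    by (rule max_nonadj_attained)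
  moreover from \<open>I \<subseteq> Suc ` S\<close> obtain J where "J \<subseteq> S" "I = Suc ` J"
    by (meson subset_image_iff)
  ultimately show "max_nonadj (Suc ` S) \<le> max_nonadj S"
    using card_le_max_nonadj[OF assms, of J] by (simp add: card_image)
next
  obtain J where J: "J \<subseteq> S" "nonadjacent J" "card J = max_nonadj S"
    by (rule max_nonadj_attained[OF assms])
  then have "card (Suc ` J) \<le> max_nonadj (Suc ` S)"
    using assms by (intro card_le_max_nonadj) auto
  then show "max_nonadj S \<le> max_nonadj (Suc ` S)"
    using J(3) by (simp add: card_image)
qed

text \<open>The greedy step: a maximum nonadjacent subset may be assumed to contain the least element.\<close>

lemma max_nonadj_zero:
  assumes "finite S" "0 \<in> S"
  shows "max_nonadj S = Suc (max_nonadj (S - {0, 1}))"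
proof (rule antisym)
  obtain I where I: "I \<subseteq> S" "nonadjacent I" "card I = max_nonadj S"
    by (rule max_nonadj_attained[OF assms(1)])
  have "0 \<notin> I \<or> 1 \<notin> I" using \<open>nonadjacent I\<close> by (auto simp: nonadjacent_def)
  then have "I \<subseteq> insert (if 0 \<in> I then 0 else 1) (I - {0, 1})" by auto
  moreover have "finite I" using I(1) assms(1) finite_subset by blast
  ultimately have "card I \<le> card (insert (if 0 \<in> I then 0 else 1) (I - {0, 1}))"
    by (intro card_mono) auto
  also have "\<dots> \<le> Suc (card (I - {0, 1}))"
    using \<open>finite I\<close> by (simp only: card_insert_if finite_Diff) simp
  also have "card (I - {0, 1}) \<le> max_nonadj (S - {0, 1})"
    using I assms(1) by (intro card_le_max_nonadj) (auto simp: nonadjacent_def)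
  finally show "max_nonadj S \<le> Suc (max_nonadj (S - {0, 1}))" using I(3) by simp
next
  have "finite (S - {0, 1})" using assms(1) by simp
  then obtain J where J: "J \<subseteq> S - {0, 1}" "nonadjacent J" "card J = max_nonadj (S - {0, 1})"
    by (rule max_nonadj_attained)
  have "finite J" using J(1) assms(1) finite_subset by blast
  have "nonadjacent (insert 0 J)" using J(1,2) by (auto simp: nonadjacent_def)
  moreover have "insert 0 J \<subseteq> S" using J(1) assms(2) by auto
  ultimately have "card (insert 0 J) \<le> max_nonadj S"
    using assms(1) card_le_max_nonadj by blast
  moreover have "0 \<notin> J" using J(1) by blast
  ultimately show "Suc (max_nonadj (S - {0, 1})) \<le> max_nonadj S"
    using J(3) \<open>finite J\<close> by simp
qed

definition adjacent_positions :: "(nat \<Rightarrow> nat \<Rightarrow> bool) \<Rightarrow> nat list \<Rightarrow> nat set" where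
  "adjacent_positions R \<pi> = {i. Suc i < length \<pi> \<and> R (\<pi> ! i) (\<pi> ! Suc i)}"

lemma ascset_eq_adjacent_positions: "ascset \<pi> = adjacent_positions (<) \<pi>"
  unfolding ascset_def adjacent_positions_def ..

lemma desset_eq_adjacent_positions: "desset \<pi> = adjacent_positions (>) \<pi>"
  unfolding desset_def adjacent_positions_def ..

lemma finite_adjacent_positions [simp]: "finite (adjacent_positions R \<pi>)"
  by (rule finite_subset[of _ "{..<length \<pi>}"]) (auto simp: adjacent_positions_def)

lemma adjacent_positions_Nil [simp]: "adjacent_positions R [] = {}"
  and adjacent_positions_singleton [simp]: "adjacent_positions R [a] = {}"
  by (simp_all add: adjacent_positions_def)

lemma adjacent_positions_Cons_minus_zero:
  "adjacent_positions R (a # l) - {0} = Suc ` adjacent_positions R l"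
proof (rule set_eqI)
  fix i show "i \<in> adjacent_positions R (a # l) - {0} \<longleftrightarrow> i \<in> Suc ` adjacent_positions R l"
    by (cases i) (auto simp: adjacent_positions_def)
qed

lemma zero_in_adjacent_positions_iff: "0 \<in> adjacent_positions R (a # b # l) \<longleftrightarrow> R a b"
  by (simp add: adjacent_positions_def)

lemma adjacent_positions_map:
  assumes "\<And>x y. R (f x) (f y) \<longleftrightarrow> R x y"
  shows "adjacent_positions R (map f \<pi>) = adjacent_positions R \<pi>"
  using assms by (auto simp: adjacent_positions_def)

lemma card_adjacent_positions_Cons_Cons:
  "card (adjacent_positions R (a # b # l)) = (if R a b then 1 else 0) + card (adjacent_positions R (b # l))"
proof -
  let ?A = "adjacent_positions R (a # b # l)"
  have "card (?A - {0}) = card (adjacent_positions R (b # l))"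
    unfolding adjacent_positions_Cons_minus_zero by (simp add: card_image)
  then show ?thesis
    using card.remove[of ?A 0] by (auto simp: zero_in_adjacent_positions_iff)
qed

lemma max_nonadj_adjacent_positions_Cons_Cons:
  "max_nonadj (adjacent_positions R (a # b # l)) =
     (if R a b then Suc (max_nonadj (adjacent_positions R l)) else max_nonadj (adjacent_positions R (b # l)))"
proof (cases "R a b")
  case True
  let ?A = "adjacent_positions R (a # b # l)"
  have "?A - {0, 1} = Suc ` (adjacent_positions R (b # l) - {0})"
    using adjacent_positions_Cons_minus_zero[of R a "b # l"] by auto
  also have "\<dots> = Suc ` Suc ` adjacent_positions R l"
    by (simp only: adjacent_positions_Cons_minus_zero)
  finally have "max_nonadj (?A - {0, 1}) = max_nonadj (adjacent_positions R l)"
    by (simp add: max_nonadj_image_Suc)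
  with True show ?thesis
    by (simp add: max_nonadj_zero zero_in_adjacent_positions_iff)
next
  case False
  then have "adjacent_positions R (a # b # l) = Suc ` adjacent_positions R (b # l)"
    using adjacent_positions_Cons_minus_zero[of R a "b # l"]
    by (auto simp: zero_in_adjacent_positions_iff)
  with False show ?thesis by (simp add: max_nonadj_image_Suc)
qed

lemma asc_Cons_Cons: "asc (a # b # l) = (if a < b then 1 else 0) + asc (b # l)"
  and des_Cons_Cons: "des (a # b # l) = (if b < a then 1 else 0) + des (b # l)"
  and MNA_Cons_Cons: "MNA (a # b # l) = (if a < b then Suc (MNA l) else MNA (b # l))"
  and MND_Cons_Cons: "MND (a # b # l) = (if b < a then Suc (MND l) else MND (b # l))"
  unfolding asc_def des_def MNA_def MND_def ascset_eq_adjacent_positions desset_eq_adjacent_positions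
  by (simp_all only: card_adjacent_positions_Cons_Cons max_nonadj_adjacent_positions_Cons_Cons)

lemma statistics_short_lists:
  "asc [] = 0" "des [] = 0" "MNA [] = 0" "MND [] = 0"
  "asc [a] = 0" "des [a] = 0" "MNA [a] = 0" "MND [a] = 0"
  by (simp_all add: asc_def des_def MNA_def MND_def ascset_eq_adjacent_positions desset_eq_adjacent_positions)

lemma statistics_map_strict_mono:
  assumes "strict_mono f"
  shows "asc (map f \<pi>) = asc \<pi>" "des (map f \<pi>) = des \<pi>" "MNA (map f \<pi>) = MNA \<pi>" "MND (map f \<pi>) = MND \<pi>"
  using adjacent_positions_map[of "(<)" f] adjacent_positions_map[of "(>)" f] strict_mono_less[OF assms]
  by (simp_all add: asc_def des_def MNA_def MND_def ascset_eq_adjacent_positions desset_eq_adjacent_positions)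

definition extremal_perms :: "nat \<Rightarrow> nat \<Rightarrow> nat list set" where
  "extremal_perms lo hi = {\<pi>. set \<pi> = {lo..hi} \<and> distinct \<pi> \<and> extremal_entries \<pi>}"

lemma Av2_213_231_eq_extremal_perms: "Av2 n [2,1,3] [2,3,1] = extremal_perms 1 n"
  unfolding Av2_def extremal_perms_def permutations_of_set_def avoids_213_231_iff by auto

lemma finite_extremal_perms [simp]: "finite (extremal_perms lo hi)"
  by (rule finite_subset[OF _ finite_permutations_of_set[of "{lo..hi}"]])
     (auto simp: extremal_perms_def permutations_of_set_def)

lemma extremal_perms_empty: "hi < lo \<Longrightarrow> extremal_perms lo hi = {[]}"
  by (auto simp: extremal_perms_def)

lemma extremal_perms_singleton: "extremal_perms a a = {[a]}"
proof -
  have "\<pi> = [a]" if "set \<pi> = {a}" "distinct \<pi>" for \<pi>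
  proof -
    have "length \<pi> = 1" using that distinct_card[of \<pi>] by simp
    then obtain x where "\<pi> = [x]" by (metis One_nat_def length_0_conv length_Suc_conv)
    with that show ?thesis by simp
  qed
  then show ?thesis by (auto simp: extremal_perms_def)
qed

lemma extremal_perms_obtain_Cons:
  assumes "\<pi> \<in> extremal_perms lo hi" "lo \<le> hi"
  obtains c r where "\<pi> = c # r" "lo \<le> c" "c \<le> hi"
proof -
  have set: "set \<pi> = {lo..hi}" using assms(1) by (simp add: extremal_perms_def)
  then obtain c r where "\<pi> = c # r" using assms(2) by (cases \<pi>) auto
  moreover have "c \<in> {lo..hi}" using set \<open>\<pi> = c # r\<close> by auto
  ultimately show thesis using that by simp
qed

lemma Cons_in_extremal_perms:
  assumes "lo < hi"
  shows "a # l \<in> extremal_perms lo hi \<longleftrightarrow>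
           (a = lo \<and> l \<in> extremal_perms (Suc lo) hi) \<or> (a = hi \<and> l \<in> extremal_perms lo (hi - 1))"
proof
  assume "a # l \<in> extremal_perms lo hi"
  then have set: "insert a (set l) = {lo..hi}" and "a \<notin> set l" "distinct l" "extremal_entries l"
    and extremal: "(\<forall>x\<in>set l. a \<le> x) \<or> (\<forall>x\<in>set l. x \<le> a)"
    by (auto simp: extremal_perms_def)
  have "lo \<in> insert a (set l)" "hi \<in> insert a (set l)" "a \<in> {lo..hi}"
    using set assms by auto
  with extremal have "a = lo \<or> a = hi" by fastforce
  moreover have "set l = {lo..hi} - {a}" using set \<open>a \<notin> set l\<close> by auto
  moreover have "{lo..hi} - {lo} = {Suc lo..hi}" "{lo..hi} - {hi} = {lo..hi - 1}"
    using assms by auto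
  ultimately have "(a = lo \<and> set l = {Suc lo..hi}) \<or> (a = hi \<and> set l = {lo..hi - 1})"
    by auto
  then show "(a = lo \<and> l \<in> extremal_perms (Suc lo) hi) \<or> (a = hi \<and> l \<in> extremal_perms lo (hi - 1))"
    using \<open>distinct l\<close> \<open>extremal_entries l\<close> by (simp add: extremal_perms_def)
next
  assume "(a = lo \<and> l \<in> extremal_perms (Suc lo) hi) \<or> (a = hi \<and> l \<in> extremal_perms lo (hi - 1))"
  then show "a # l \<in> extremal_perms lo hi"
  proof (elim disjE conjE)
    assume "a = lo" "l \<in> extremal_perms (Suc lo) hi"
    moreover have "{lo..hi} = insert lo {Suc lo..hi}" using assms by auto
    ultimately show ?thesis by (simp add: extremal_perms_def)
  next
    assume "a = hi" "l \<in> extremal_perms lo (hi - 1)"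
    moreover have "{lo..hi} = insert hi {lo..hi - 1}" using assms by auto
    ultimately show ?thesis using assms by (auto simp: extremal_perms_def)
  qed
qed

lemma extremal_perms_split:
  assumes "lo < hi"
  shows "extremal_perms lo hi = Cons lo ` extremal_perms (Suc lo) hi \<union> Cons hi ` extremal_perms lo (hi - 1)"
proof (rule set_eqI)
  fix \<pi>
  have "[] \<notin> extremal_perms lo hi" using assms by (auto simp: extremal_perms_def)
  then show "\<pi> \<in> extremal_perms lo hi \<longleftrightarrow>
      \<pi> \<in> Cons lo ` extremal_perms (Suc lo) hi \<union> Cons hi ` extremal_perms lo (hi - 1)"
    using Cons_in_extremal_perms[OF assms] by (cases \<pi>) auto
qed

lemma sum_extremal_perms_split:
  assumes "lo < hi"
  shows "(\<Sum>\<pi>\<in>extremal_perms lo hi. f \<pi>) =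
           (\<Sum>\<sigma>\<in>extremal_perms (Suc lo) hi. f (lo # \<sigma>)) + (\<Sum>\<sigma>\<in>extremal_perms lo (hi - 1). f (hi # \<sigma>))"
proof -
  have "Cons lo ` extremal_perms (Suc lo) hi \<inter> Cons hi ` extremal_perms lo (hi - 1) = {}"
    using assms by auto
  then show ?thesis
    unfolding extremal_perms_split[OF assms]
    by (simp add: sum.union_disjoint sum.reindex)
qed

lemma extremal_entries_map_strict_mono:
  assumes "strict_mono f"
  shows "extremal_entries (map f \<pi>) \<longleftrightarrow> extremal_entries \<pi>"
  by (induction \<pi>) (simp_all add: strict_mono_less_eq[OF assms])

lemma extremal_perms_shift:
  "extremal_perms (lo + k) (hi + k) = map (\<lambda>x. x + k) ` extremal_perms lo hi"
proof
  show "map (\<lambda>x. x + k) ` extremal_perms lo hi \<subseteq> extremal_perms (lo + k) (hi + k)"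
    by (auto simp: extremal_perms_def extremal_entries_map_strict_mono[OF strict_mono_add] distinct_map)
next
  show "extremal_perms (lo + k) (hi + k) \<subseteq> map (\<lambda>x. x + k) ` extremal_perms lo hi"
  proof
    fix \<pi> assume "\<pi> \<in> extremal_perms (lo + k) (hi + k)"
    then have set: "set \<pi> = {lo + k..hi + k}" and "distinct \<pi>" "extremal_entries \<pi>"
      by (simp_all add: extremal_perms_def)
    define \<sigma> where "\<sigma> = map (\<lambda>x. x - k) \<pi>"
    have \<pi>: "\<pi> = map (\<lambda>x. x + k) \<sigma>"
      unfolding \<sigma>_def map_map by (rule sym, rule map_idI) (use set in auto)
    have "set \<sigma> = {lo..hi}"
      using set unfolding \<sigma>_def by (auto simp: image_iff intro!: bexI[of _ "_ + k"])
    then have "\<sigma> \<in> extremal_perms lo hi"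
      using \<open>distinct \<pi>\<close> \<open>extremal_entries \<pi>\<close> unfolding \<pi>
      by (simp add: extremal_perms_def extremal_entries_map_strict_mono[OF strict_mono_add] distinct_map)
    with \<pi> show "\<pi> \<in> map (\<lambda>x. x + k) ` extremal_perms lo hi" by blast
  qed
qed

lemma sum_extremal_perms_shift:
  "(\<Sum>\<pi>\<in>extremal_perms (lo + k) (hi + k). f \<pi>) = (\<Sum>\<pi>\<in>extremal_perms lo hi. f (map (\<lambda>x. x + k) \<pi>))"
  unfolding extremal_perms_shift by (simp add: sum.reindex inj_on_def)

context
  fixes p q y z :: "'a :: comm_semiring_1"
begin

definition weight :: "nat list \<Rightarrow> 'a" where
  "weight \<pi> = p ^ asc \<pi> * q ^ des \<pi> * y ^ MNA \<pi> * z ^ MND \<pi>"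

lemma weight_singleton: "weight [a] = 1"
  by (simp add: weight_def statistics_short_lists)

lemma weight_asc_pair: "a < b \<Longrightarrow> weight [a, b] = p * y"
  and weight_des_pair: "b < a \<Longrightarrow> weight [a, b] = q * z"
  by (simp_all add: weight_def asc_Cons_Cons des_Cons_Cons MNA_Cons_Cons MND_Cons_Cons statistics_short_lists)

lemma weight_asc_asc: "a < b \<Longrightarrow> b < c \<Longrightarrow> weight (a # b # c # l) = p^2 * y * weight (c # l)"
  and weight_asc_des: "a < b \<Longrightarrow> c < b \<Longrightarrow> weight (a # b # c # l) = p * y * weight (b # c # l)"
  and weight_des_asc: "b < a \<Longrightarrow> b < c \<Longrightarrow> weight (a # b # c # l) = q * z * weight (b # c # l)"
  and weight_des_des: "b < a \<Longrightarrow> c < b \<Longrightarrow> weight (a # b # c # l) = q^2 * z * weight (c # l)"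
  by (simp_all add: weight_def asc_Cons_Cons des_Cons_Cons MNA_Cons_Cons MND_Cons_Cons
      power2_eq_square ac_simps)

lemma weight_map_strict_mono: "strict_mono f \<Longrightarrow> weight (map f \<pi>) = weight \<pi>"
  by (simp add: weight_def statistics_map_strict_mono)

definition weight_sum :: "nat \<Rightarrow> 'a" where
  "weight_sum m = (\<Sum>\<pi>\<in>extremal_perms 0 m. weight \<pi>)"

definition weight_sum_asc :: "nat \<Rightarrow> 'a" where
  "weight_sum_asc m = (\<Sum>\<sigma>\<in>extremal_perms 1 m. weight (0 # \<sigma>))"

text \<open>Only meaningful for \<open>0 < m\<close>.\<close>

definition weight_sum_des :: "nat \<Rightarrow> 'a" where
  "weight_sum_des m = (\<Sum>\<sigma>\<in>extremal_perms 0 (m - 1). weight (m # \<sigma>))"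

lemma weight_sum_shift: "(\<Sum>\<pi>\<in>extremal_perms k (m + k). weight \<pi>) = weight_sum m"
  using sum_extremal_perms_shift[of weight 0 k m]
  by (simp add: weight_sum_def weight_map_strict_mono[OF strict_mono_add])

lemma weight_sum_0: "weight_sum 0 = 1"
  by (simp add: weight_sum_def extremal_perms_singleton weight_singleton)

lemma weight_sum_Suc: "weight_sum (Suc m) = weight_sum_asc (Suc m) + weight_sum_des (Suc m)"
  unfolding weight_sum_def weight_sum_asc_def weight_sum_des_def
  by (simp add: sum_extremal_perms_split)

lemma weight_sum_asc_1: "weight_sum_asc 1 = p * y"
  and weight_sum_des_1: "weight_sum_des 1 = q * z"
  by (simp_all add: weight_sum_asc_def weight_sum_des_def extremal_perms_singleton
      weight_asc_pair weight_des_pair)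

lemma weight_sum_asc_Suc_Suc:
  "weight_sum_asc (m + 2) = p^2 * y * weight_sum m + p * y * weight_sum_des (m + 1)"
proof -
  have "weight_sum_asc (m + 2) =
      (\<Sum>\<tau>\<in>extremal_perms 2 (m + 2). weight (0 # 1 # \<tau>)) +
      (\<Sum>\<tau>\<in>extremal_perms 1 (m + 1). weight (0 # (m + 2) # \<tau>))"
    unfolding weight_sum_asc_def by (simp add: sum_extremal_perms_split numeral_2_eq_2)
  also have "(\<Sum>\<tau>\<in>extremal_perms 2 (m + 2). weight (0 # 1 # \<tau>)) =
      (\<Sum>\<tau>\<in>extremal_perms 2 (m + 2). p^2 * y * weight \<tau>)"
  proof (rule sum.cong[OF refl])
    fix \<tau> assume "\<tau> \<in> extremal_perms 2 (m + 2)"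
    then obtain c r where "\<tau> = c # r" "2 \<le> c" by (rule extremal_perms_obtain_Cons) simp
    then show "weight (0 # 1 # \<tau>) = p^2 * y * weight \<tau>" by (simp add: weight_asc_asc)
  qed
  also have "(\<Sum>\<tau>\<in>extremal_perms 1 (m + 1). weight (0 # (m + 2) # \<tau>)) =
      (\<Sum>\<tau>\<in>extremal_perms 1 (m + 1). p * y * weight ((m + 2) # \<tau>))"
  proof (rule sum.cong[OF refl])
    fix \<tau> assume "\<tau> \<in> extremal_perms 1 (m + 1)"
    then obtain c r where "\<tau> = c # r" "c \<le> m + 1" by (rule extremal_perms_obtain_Cons) simp
    then show "weight (0 # (m + 2) # \<tau>) = p * y * weight ((m + 2) # \<tau>)" by (simp add: weight_asc_des)
  qed
  finally have "weight_sum_asc (m + 2) =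
      p^2 * y * (\<Sum>\<tau>\<in>extremal_perms 2 (m + 2). weight \<tau>) +
      p * y * (\<Sum>\<tau>\<in>extremal_perms 1 (m + 1). weight ((m + 2) # \<tau>))"
    by (simp add: sum_distrib_left)
  moreover have "(\<Sum>\<tau>\<in>extremal_perms 1 (m + 1). weight ((m + 2) # \<tau>)) = weight_sum_des (m + 1)"
    using sum_extremal_perms_shift[of "\<lambda>\<tau>. weight ((m + 2) # \<tau>)" 0 1 m]
          weight_map_strict_mono[OF strict_mono_add, of 1 "(m + 1) # _"]
    by (simp add: weight_sum_des_def)
  ultimately show ?thesis
    using weight_sum_shift[of 2 m] by (simp add: add.commute)
qed

lemma weight_sum_des_Suc_Suc:
  "weight_sum_des (m + 2) = q * z * weight_sum_asc (m + 1) + q^2 * z * weight_sum m"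
proof -
  have "weight_sum_des (m + 2) =
      (\<Sum>\<tau>\<in>extremal_perms 1 (m + 1). weight ((m + 2) # 0 # \<tau>)) +
      (\<Sum>\<tau>\<in>extremal_perms 0 m. weight ((m + 2) # (m + 1) # \<tau>))"
    unfolding weight_sum_des_def by (simp add: sum_extremal_perms_split)
  also have "(\<Sum>\<tau>\<in>extremal_perms 1 (m + 1). weight ((m + 2) # 0 # \<tau>)) =
      (\<Sum>\<tau>\<in>extremal_perms 1 (m + 1). q * z * weight (0 # \<tau>))"
  proof (rule sum.cong[OF refl])
    fix \<tau> assume "\<tau> \<in> extremal_perms 1 (m + 1)"
    then obtain c r where "\<tau> = c # r" "1 \<le> c" by (rule extremal_perms_obtain_Cons) simp
    then show "weight ((m + 2) # 0 # \<tau>) = q * z * weight (0 # \<tau>)" by (simp add: weight_des_asc)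
  qed
  also have "(\<Sum>\<tau>\<in>extremal_perms 0 m. weight ((m + 2) # (m + 1) # \<tau>)) =
      (\<Sum>\<tau>\<in>extremal_perms 0 m. q^2 * z * weight \<tau>)"
  proof (rule sum.cong[OF refl])
    fix \<tau> assume "\<tau> \<in> extremal_perms 0 m"
    then obtain c r where "\<tau> = c # r" "c \<le> m" by (rule extremal_perms_obtain_Cons) simp
    then show "weight ((m + 2) # (m + 1) # \<tau>) = q^2 * z * weight \<tau>" by (simp add: weight_des_des)
  qed
  finally show ?thesis
    by (simp add: weight_sum_def weight_sum_asc_def sum_distrib_left)
qed

lemma weight_sum_recurrence:
  "weight_sum (m + 3) =
     (p^2 * y + q^2 * z + p * q * y * z) * weight_sum (m + 1)
     + (p^2 * q * y * z + p * q^2 * y * z) * weight_sum m"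
  using weight_sum_asc_Suc_Suc[of m] weight_sum_asc_Suc_Suc[of "m + 1"]
    weight_sum_des_Suc_Suc[of m] weight_sum_des_Suc_Suc[of "m + 1"]
    weight_sum_Suc[of "m + 2"] weight_sum_Suc[of m]
  by (simp add: algebra_simps power2_eq_square eval_nat_numeral)

lemma weight_sum_initial:
  "weight_sum 1 = p * y + q * z"
  "weight_sum 2 = p^2 * y + q^2 * z + 2 * p * q * y * z"
  using weight_sum_asc_Suc_Suc[of 0] weight_sum_des_Suc_Suc[of 0] weight_sum_Suc[of 0] weight_sum_Suc[of 1]
    weight_sum_0 weight_sum_asc_1 weight_sum_des_1
  by (simp_all add: algebra_simps mult_2_right power2_eq_square eval_nat_numeral)

lemma sum_Av2_213_231_weight:
  "(\<Sum>\<pi>\<in>Av2 n [2,1,3] [2,3,1]. weight \<pi>) = (if n = 0 then 1 else weight_sum (n - 1))"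
proof (cases n)
  case 0
  then show ?thesis
    unfolding Av2_213_231_eq_extremal_perms
    by (simp add: extremal_perms_empty weight_def statistics_short_lists)
next
  case (Suc m)
  then show ?thesis
    unfolding Av2_213_231_eq_extremal_perms using weight_sum_shift[of 1 m] by simp
qed

end

lemma Abs_fps_third_order_recurrence:
  fixes f :: "nat \<Rightarrow> 'a :: comm_ring_1"
  assumes "\<And>n. f (n + 3) = a * f (n + 2) + b * f (n + 1) + c * f n"
  shows "Abs_fps f * (1 - fps_const a * fps_X - fps_const b * fps_X ^ 2 - fps_const c * fps_X ^ 3) =
           fps_const (f 0) + fps_const (f 1 - a * f 0) * fps_X
           + fps_const (f 2 - a * f 1 - b * f 0) * fps_X ^ 2" (is "?L = ?R")
proof (rule fps_ext)
  fix n :: nat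
  have expand: "?L = Abs_fps f - fps_const a * (Abs_fps f * fps_X ^ 1)
      - fps_const b * (Abs_fps f * fps_X ^ 2) - fps_const c * (Abs_fps f * fps_X ^ 3)"
    by (simp add: algebra_simps)
  consider "n = 0" | "n = 1" | "n = 2" | k where "n = k + 3" by atomize_elim presburger
  then show "fps_nth ?L n = fps_nth ?R n"
    unfolding expand fps_sub_nth fps_mult_left_const_nth fps_X_power_mult_right_nth fps_nth_Abs_fps
    by cases (simp_all add: assms algebra_simps)
qed

lemma Abs_fps_weight_sum_times_denominator:
  fixes p q y z :: "'a :: comm_ring_1"
  shows "Abs_fps (weight_sum p q y z) *
           (1 - fps_const (p^2 * y) * fps_X ^ 2 - fps_const (q^2 * z) * fps_X ^ 2
            - fps_const (p * q * y * z) * fps_X ^ 2 - fps_const (p^2 * q * y * z) * fps_X ^ 3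
            - fps_const (p * q^2 * y * z) * fps_X ^ 3)
         = 1 + fps_const (p * y + q * z) * fps_X + fps_const (p * q * y * z) * fps_X ^ 2"
    (is "?W * ?D = _")
proof -
  define \<alpha> where "\<alpha> = p^2 * y + q^2 * z + p * q * y * z"
  define \<beta> where "\<beta> = p^2 * q * y * z + p * q^2 * y * z"
  have D: "?D = 1 - fps_const 0 * fps_X - fps_const \<alpha> * fps_X ^ 2 - fps_const \<beta> * fps_X ^ 3"
    unfolding \<alpha>_def \<beta>_def by (simp del: fps_const_add add: fps_const_add[symmetric] algebra_simps)
  have "?W * ?D =
      fps_const (weight_sum p q y z 0) + fps_const (weight_sum p q y z 1 - 0 * weight_sum p q y z 0) * fps_X
      + fps_const (weight_sum p q y z 2 - 0 * weight_sum p q y z 1 - \<alpha> * weight_sum p q y z 0) * fps_X ^ 2"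
    unfolding D
    by (rule Abs_fps_third_order_recurrence[where a = 0]) (simp add: weight_sum_recurrence \<alpha>_def \<beta>_def)
  moreover have "weight_sum p q y z 1 - 0 * weight_sum p q y z 0 = p * y + q * z"
    "weight_sum p q y z 2 - 0 * weight_sum p q y z 1 - \<alpha> * weight_sum p q y z 0 = p * q * y * z"
    using weight_sum_initial[of p q y z] weight_sum_0[of p q y z]
    by (simp_all add: \<alpha>_def algebra_simps mult_2)
  ultimately show ?thesis
    by (simp only: weight_sum_0 fps_const_1_eq_1)
qed

theorem theorem8:
  fixes p q y z :: "'a :: field"
  shows "Abs_fps (\<lambda>n. \<Sum>\<pi>\<in>Av2 n [2,1,3] [2,3,1].
            p ^ asc \<pi> * q ^ des \<pi> * y ^ MNA \<pi> * z ^ MND \<pi>)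
       = (1 + fps_X + fps_const (p * y) * fps_X ^ 2 - fps_const (p^2 * y) * fps_X ^ 2
            + fps_const (q * z) * fps_X ^ 2 - fps_const (q^2 * z) * fps_X ^ 2
            - fps_const (p * q * y * z) * fps_X ^ 2 + fps_const (p * q * y * z) * fps_X ^ 3
            - fps_const (p^2 * q * y * z) * fps_X ^ 3 - fps_const (p * q^2 * y * z) * fps_X ^ 3)
         / (1 - fps_const (p^2 * y) * fps_X ^ 2 - fps_const (q^2 * z) * fps_X ^ 2
            - fps_const (p * q * y * z) * fps_X ^ 2 - fps_const (p^2 * q * y * z) * fps_X ^ 3
            - fps_const (p * q^2 * y * z) * fps_X ^ 3)"
  (is "?G = ?N / ?D")
proof -
  let ?W = "Abs_fps (weight_sum p q y z)"
  have "?G = 1 + fps_X * ?W"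
    by (rule fps_ext)
      (simp only: fps_nth_Abs_fps sum_Av2_213_231_weight[of p q y z, unfolded weight_def], simp)
  then have "?G * ?D = ?D + fps_X * (?W * ?D)"
    by (simp only: distrib_right mult_1_left mult.assoc)
  also have "\<dots> = ?N"
    unfolding Abs_fps_weight_sum_times_denominator
    by (simp del: fps_const_add add: fps_const_add[symmetric] algebra_simps power2_eq_square power3_eq_cube)
  finally have GD: "?G * ?D = ?N" .
  have "fps_nth ?D 0 = 1" by simp
  then have "?D \<noteq> 0" by (metis fps_zero_nth zero_neq_one)
  then have "?G = ?G * ?D / ?D" by (rule nonzero_mult_div_cancel_right[symmetric])
  then show ?thesis unfolding GD .
qed

end
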